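(* For a Polish group $G$, every $K_\sigma$ subgroup of $G$ is compactly generated if and only if every countable subgroup of $G$ is compactly generated.
   Context: A subgroup $H$ of a topological group $G$ is compactly generated if $H=\langle K\rangle$ (the subgroup generated by $K$) for some compact $K\subseteq G$; it is $K_\sigma$ if it is a countable union of compact sets. *)

theory Defs
  imports "HOL-Analysis.Analysis" "HOL-Algebra.Generated_Groups"
begin

definition topological_group :: "('a, 'b) monoid_scheme \<Rightarrow> 'a topology \<Rightarrow> bool" where
  "topological_group G X \<longleftrightarrow>
     group G \<and> topspace X = carrier G \<and>
     continuous_map (prod_topology X X) X (\<lambda>(x, y). mult G x y) \<and>
     continuous_map X X (\<lambda>x. m_inv G x)"

definition Polish_space :: "'a topology \<Rightarrow> bool" where
  "Polish_space X \<longleftrightarrow> completely_metrizable_space X \<and> separable_space X"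

definition Polish_group :: "('a, 'b) monoid_scheme \<Rightarrow> 'a topology \<Rightarrow> bool" where
  "Polish_group G X \<longleftrightarrow> topological_group G X \<and> Polish_space X"

definition compactly_generated :: "('a, 'b) monoid_scheme \<Rightarrow> 'a topology \<Rightarrow> 'a set \<Rightarrow> bool" where
  "compactly_generated G X H \<longleftrightarrow>
     (\<exists>K. K \<subseteq> carrier G \<and> compactin X K \<and> H = generate G K)"

definition K_sigma :: "'a topology \<Rightarrow> 'a set \<Rightarrow> bool" where
  "K_sigma X H \<longleftrightarrow> (\<exists>K :: nat \<Rightarrow> 'a set. (\<forall>n. compactin X (K n)) \<and> H = (\<Union>n. K n))"

end

theory Submission
  imports Defs
begin

text \<open>A countable subgroup is a countable union of singletons, hence \<open>K\<^sub>\<sigma>\<close>; so the first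
  condition implies the second. Conversely, let \<open>H = \<Union>n. K\<^sub>n\<close> with \<open>K\<^sub>n\<close> compact, in a
  metrizable group. Cover each \<open>K\<^sub>n\<close> by finitely many left translates \<open>f \<cdot> B(1, 1/(n+1))\<close> with
  \<open>f \<in> F\<^sub>n \<subseteq> K\<^sub>n\<close>. The pieces \<open>M\<^sub>n = F\<^sub>n\<inverse> K\<^sub>n \<inter> B[1, 1/(n+1)]\<close> are compact and shrink to
  \<open>1\<close>, so \<open>M = {1} \<union> \<Union>n. M\<^sub>n\<close> is compact, and \<open>H\<close> is generated by \<open>M\<close> together with the
  countable set \<open>\<Union>n. F\<^sub>n\<close>. The countable subgroup generated by the latter is, by hypothesis,
  generated by a compact set \<open>K\<close>, and then \<open>K \<union> M\<close> is a compact generating set of \<open>H\<close>.\<close>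

fun generate_level :: "('a, 'b) monoid_scheme \<Rightarrow> 'a set \<Rightarrow> nat \<Rightarrow> 'a set" where
  "generate_level G S 0 = insert \<one>\<^bsub>G\<^esub> (S \<union> m_inv G ` S)"
| "generate_level G S (Suc n) =
     generate_level G S n \<union> (\<lambda>(a, b). a \<otimes>\<^bsub>G\<^esub> b) ` (generate_level G S n \<times> generate_level G S n)"

lemma generate_level_mono: "m \<le> n \<Longrightarrow> generate_level G S m \<subseteq> generate_level G S n"
  by (induction n) (auto simp: le_Suc_eq)

lemma countable_generate_level: "countable S \<Longrightarrow> countable (generate_level G S n)"
  by (induction n) auto

lemma generate_subset_Union_generate_level: "generate G S \<subseteq> (\<Union>n. generate_level G S n)"
proof
  fix x assume "x \<in> generate G S"
  then show "x \<in> (\<Union>n. generate_level G S n)"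
  proof induction
    case (eng h1 h2)
    then obtain i j where "h1 \<in> generate_level G S i" "h2 \<in> generate_level G S j" by auto
    then have "h1 \<in> generate_level G S (max i j)" "h2 \<in> generate_level G S (max i j)"
      by (meson generate_level_mono max.cobounded1 max.cobounded2 subsetD)+
    then have "h1 \<otimes>\<^bsub>G\<^esub> h2 \<in> generate_level G S (Suc (max i j))" by auto
    then show ?case by blast
  qed (auto intro: exI[of _ 0])
qed

lemma countable_generate: "countable S \<Longrightarrow> countable (generate G S)"
  by (rule countable_subset[OF generate_subset_Union_generate_level])
    (simp add: countable_generate_level)

lemma (in group) generate_Un_subset_cong:
  assumes "A \<subseteq> generate G B" "B \<subseteq> carrier G" "C \<subseteq> carrier G"
  shows "generate G (A \<union> C) \<subseteq> generate G (B \<union> C)"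
proof (rule generate_subgroup_incl)
  have "generate G B \<subseteq> generate G (B \<union> C)" by (rule mono_generate) blast
  moreover have "C \<subseteq> generate G (B \<union> C)" by (auto intro: generate.incl)
  ultimately show "A \<union> C \<subseteq> generate G (B \<union> C)" using assms(1) by blast
  show "subgroup (generate G (B \<union> C)) G" by (rule generate_is_subgroup) (use assms in blast)
qed

lemma (in group) generate_Un_cong:
  assumes "generate G A = generate G B" "A \<subseteq> carrier G" "B \<subseteq> carrier G" "C \<subseteq> carrier G"
  shows "generate G (A \<union> C) = generate G (B \<union> C)"
proof (rule subset_antisym)
  show "generate G (A \<union> C) \<subseteq> generate G (B \<union> C)"
    using generate.incl[of _ A G] assms by (intro generate_Un_subset_cong) auto
  show "generate G (B \<union> C) \<subseteq> generate G (A \<union> C)"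
    using generate.incl[of _ B G] assms by (intro generate_Un_subset_cong) auto
qed

lemma countable_imp_K_sigma:
  assumes "countable S" "S \<subseteq> topspace X"
  shows "K_sigma X S"
  unfolding K_sigma_def
proof (intro exI conjI allI)
  show "compactin X (S \<inter> {from_nat_into S n})" for n
    using assms(2) by (intro finite_imp_compactin) auto
  show "S = (\<Union>n. S \<inter> {from_nat_into S n})"
    using from_nat_into_surj[OF assms(1)] by blast
qed

lemma compactin_insert_Union_shrinking:
  assumes compact: "\<And>n. compactin X (M n)" and "a \<in> topspace X"
    and shrinking: "\<And>U. openin X U \<Longrightarrow> a \<in> U \<Longrightarrow> eventually (\<lambda>n. M n \<subseteq> U) sequentially"
  shows "compactin X (insert a (\<Union>n. M n))"
  unfolding compactin_def
proof (intro conjI allI impI)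
  show "insert a (\<Union>n. M n) \<subseteq> topspace X"
    using assms(2) compact compactin_subset_topspace by blast
  fix \<U> assume \<U>: "(\<forall>U\<in>\<U>. openin X U) \<and> insert a (\<Union>n. M n) \<subseteq> \<Union>\<U>"
  then obtain U where U: "U \<in> \<U>" "a \<in> U" by blast
  then obtain N where N: "\<And>n. n \<ge> N \<Longrightarrow> M n \<subseteq> U"
    using shrinking \<U> unfolding eventually_sequentially by blast
  have "compactin X (\<Union>n<N. M n)" by (rule compactin_Union) (auto simp: compact)
  moreover have "(\<Union>n<N. M n) \<subseteq> \<Union>\<U>" using \<U> by blast
  ultimately obtain \<V> where \<V>: "finite \<V>" "\<V> \<subseteq> \<U>" "(\<Union>n<N. M n) \<subseteq> \<Union>\<V>"
    using \<U> unfolding compactin_def by meson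
  have "M n \<subseteq> \<Union>(insert U \<V>)" for n
    using \<V>(3) N[of n] by (cases "n < N") auto
  then show "\<exists>\<F>. finite \<F> \<and> \<F> \<subseteq> \<U> \<and> insert a (\<Union>n. M n) \<subseteq> \<Union>\<F>"
    using \<V> U by (intro exI[of _ "insert U \<V>"]) auto
qed

lemma (in Metric_space) compactin_insert_Union_mcball_shrinking:
  assumes compact: "\<And>n. compactin mtopology (A n)" and small: "\<And>n. A n \<subseteq> mcball a (r n)"
    and "r \<longlonglongrightarrow> 0" "a \<in> M"
  shows "compactin mtopology (insert a (\<Union>n. A n))"
proof (rule compactin_insert_Union_shrinking[OF compact])
  show "a \<in> topspace mtopology" using \<open>a \<in> M\<close> by simp
  fix U assume "openin mtopology U" "a \<in> U"
  then obtain e where "e > 0" and "mcball a e \<subseteq> U"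
    unfolding openin_mtopology_mcball by blast
  from \<open>r \<longlonglongrightarrow> 0\<close> \<open>e > 0\<close> have "eventually (\<lambda>n. r n < e) sequentially"
    by (rule order_tendstoD)
  then show "eventually (\<lambda>n. A n \<subseteq> U) sequentially"
  proof (rule eventually_mono)
    show "A n \<subseteq> U" if "r n < e" for n
      using small[of n] mcball_subset_concentric[of "r n" e a] that \<open>mcball a e \<subseteq> U\<close> by auto
  qed
qed

lemma topological_group_continuous_lmult:
  assumes "topological_group G X" "a \<in> carrier G"
  shows "continuous_map X X (\<lambda>y. a \<otimes>\<^bsub>G\<^esub> y)"
proof -
  have mult: "continuous_map (prod_topology X X) X (\<lambda>(x, y). x \<otimes>\<^bsub>G\<^esub> y)"
    and X: "topspace X = carrier G"
    using assms(1) unfolding topological_group_def by auto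
  have "continuous_map X (prod_topology X X) (\<lambda>y. (a, y))"
    by (intro continuous_map_pairedI) (auto simp: X assms(2))
  from continuous_map_compose[OF this mult] show ?thesis by (simp add: o_def)
qed

lemma topological_group_compactin_lmult_image:
  assumes "topological_group G X" "a \<in> carrier G" "compactin X K"
  shows "compactin X ((\<lambda>y. a \<otimes>\<^bsub>G\<^esub> y) ` K)"
  by (rule image_compactin[OF assms(3) topological_group_continuous_lmult[OF assms(1,2)]])

lemma topological_group_compactin_finite_translates:
  fixes G (structure)
  assumes TG: "topological_group G X" and K: "compactin X K"
    and U: "openin X U" "\<one> \<in> U"
  shows "\<exists>F. finite F \<and> F \<subseteq> K \<and> (\<forall>y\<in>K. \<exists>f\<in>F. inv f \<otimes> y \<in> U)"
proof -
  interpret group G using TG by (simp add: topological_group_def)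
  have X: "topspace X = carrier G" using TG by (simp add: topological_group_def)
  have KG: "K \<subseteq> carrier G" using K compactin_subset_topspace X by blast
  define V where "V x = {y \<in> topspace X. inv x \<otimes> y \<in> U}" for x
  have "openin X (V x)" if "x \<in> K" for x
    using openin_continuous_map_preimage[OF topological_group_continuous_lmult[OF TG] U(1)]
      that KG by (simp add: V_def subsetD)
  moreover have "K \<subseteq> \<Union>(V ` K)"
    using KG U(2) X by (force simp: V_def)
  ultimately obtain \<V> where "finite \<V>" "\<V> \<subseteq> V ` K" "K \<subseteq> \<Union>\<V>"
    using K unfolding compactin_def by (simp add: ball_simps) blast
  then obtain F where "F \<subseteq> K" "finite F" "K \<subseteq> \<Union>(V ` F)"
    using finite_subset_image[of \<V> V K] by blast
  then show ?thesis by (intro exI[of _ F]) (auto simp: V_def)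
qed

lemma topological_group_compactin_translates_into_closed:
  fixes G (structure)
  assumes TG: "topological_group G X" and K: "compactin X K"
    and U: "openin X U" "\<one> \<in> U" "U \<subseteq> C" and C: "closedin X C"
  shows "\<exists>F M. finite F \<and> F \<subseteq> K \<and> compactin X M \<and> M \<subseteq> C \<and>
    M \<subseteq> (\<Union>f\<in>F. (\<lambda>y. inv f \<otimes> y) ` K) \<and> (\<forall>y\<in>K. \<exists>f\<in>F. inv f \<otimes> y \<in> M)"
proof -
  interpret group G using TG by (simp add: topological_group_def)
  have KG: "K \<subseteq> carrier G"
    using compactin_subset_topspace[OF K] TG by (simp add: topological_group_def)
  obtain F where F: "finite F" "F \<subseteq> K" and cover: "\<forall>y\<in>K. \<exists>f\<in>F. inv f \<otimes> y \<in> U"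
    using topological_group_compactin_finite_translates[OF TG K U(1,2)] by blast
  define M where "M = (\<Union>f\<in>F. (\<lambda>y. inv f \<otimes> y) ` K) \<inter> C"
  have "compactin X ((\<lambda>y. inv f \<otimes> y) ` K)" if "f \<in> F" for f
  proof (rule topological_group_compactin_lmult_image[OF TG _ K])
    show "inv f \<in> carrier G" using that F(2) KG by blast
  qed
  then have "compactin X (\<Union>f\<in>F. (\<lambda>y. inv f \<otimes> y) ` K)"
    using F(1) by (intro compactin_Union) auto
  then have "compactin X M" unfolding M_def using C by (rule compact_Int_closedin)
  moreover have "\<forall>y\<in>K. \<exists>f\<in>F. inv f \<otimes> y \<in> M"
    using cover U(3) unfolding M_def by blast
  ultimately show ?thesis using F unfolding M_def by blast
qed

lemma (in group) generate_eq_subgroup_if_left_translates: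
  assumes sH: "subgroup H G" and "F \<subseteq> H" "M \<subseteq> H"
    and translates: "\<And>x. x \<in> H \<Longrightarrow> \<exists>f\<in>F. inv f \<otimes> x \<in> M"
  shows "generate G (F \<union> M) = H"
proof
  show "generate G (F \<union> M) \<subseteq> H"
    using assms(2,3) by (intro generate_subgroup_incl[OF _ sH]) blast
  show "H \<subseteq> generate G (F \<union> M)"
  proof
    fix x assume "x \<in> H"
    then obtain f where f: "f \<in> F" "inv f \<otimes> x \<in> M" using translates by blast
    have "f \<in> carrier G" "x \<in> carrier G"
      using f(1) \<open>x \<in> H\<close> assms(2) subgroup.subset[OF sH] by blast+
    then have "x = f \<otimes> (inv f \<otimes> x)" by (simp add: m_assoc[symmetric])
    moreover have "f \<in> generate G (F \<union> M)" using f(1) by (blast intro: generate.incl)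
    moreover have "inv f \<otimes> x \<in> generate G (F \<union> M)" using f(2) by (blast intro: generate.incl)
    ultimately show "x \<in> generate G (F \<union> M)" by (metis generate.eng)
  qed
qed

lemma K_sigma_subgroup_generated_countable_compact:
  fixes G (structure)
  assumes TG: "topological_group G X" and "metrizable_space X"
    and sH: "subgroup H G" and "K_sigma X H"
  shows "\<exists>F M. countable F \<and> F \<subseteq> H \<and> compactin X M \<and> M \<subseteq> H \<and> H = generate G (F \<union> M)"
proof -
  interpret group G using TG by (simp add: topological_group_def)
  have X_carrier: "topspace X = carrier G" using TG by (simp add: topological_group_def)
  obtain S d where "Metric_space S d" and X: "X = Metric_space.mtopology S d"
    using \<open>metrizable_space X\<close> unfolding metrizable_space_def by blast
  interpret Metric_space S d by fact
  have "\<one> \<in> S" using X_carrier X by simp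
  obtain K where K: "\<And>n::nat. compactin X (K n)" and HK: "H = (\<Union>n. K n)"
    using \<open>K_sigma X H\<close> unfolding K_sigma_def by blast
  define r where "r n = inverse (real (Suc n))" for n
  have "\<forall>n. \<exists>F M. finite F \<and> F \<subseteq> K n \<and> compactin X M \<and> M \<subseteq> mcball \<one> (r n) \<and>
    M \<subseteq> (\<Union>f\<in>F. (\<lambda>y. inv f \<otimes> y) ` K n) \<and> (\<forall>y\<in>K n. \<exists>f\<in>F. inv f \<otimes> y \<in> M)"
  proof
    fix n
    show "\<exists>F M. finite F \<and> F \<subseteq> K n \<and> compactin X M \<and> M \<subseteq> mcball \<one> (r n) \<and>
      M \<subseteq> (\<Union>f\<in>F. (\<lambda>y. inv f \<otimes> y) ` K n) \<and> (\<forall>y\<in>K n. \<exists>f\<in>F. inv f \<otimes> y \<in> M)"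
      using \<open>\<one> \<in> S\<close>
      by (intro topological_group_compactin_translates_into_closed[OF TG K, where U = "mball \<one> (r n)"])
        (simp_all add: X r_def mball_subset_mcball)
  qed
  then obtain F M where "\<forall>n. finite (F n) \<and> F n \<subseteq> K n \<and> compactin X (M n) \<and>
    M n \<subseteq> mcball \<one> (r n) \<and> M n \<subseteq> (\<Union>f\<in>F n. (\<lambda>y. inv f \<otimes> y) ` K n) \<and>
    (\<forall>y\<in>K n. \<exists>f\<in>F n. inv f \<otimes> y \<in> M n)"
    by metis
  then have F: "\<And>n. finite (F n)" "\<And>n. F n \<subseteq> K n"
    and M: "\<And>n. compactin X (M n)" "\<And>n. M n \<subseteq> mcball \<one> (r n)"
      "\<And>n. M n \<subseteq> (\<Union>f\<in>F n. (\<lambda>y. inv f \<otimes> y) ` K n)"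
    and translates: "\<And>n y. y \<in> K n \<Longrightarrow> \<exists>f\<in>F n. inv f \<otimes> y \<in> M n"
    by blast+
  have FH: "(\<Union>n. F n) \<subseteq> H" using F(2) HK by blast
  have MH: "M n \<subseteq> H" for n
  proof
    fix z assume "z \<in> M n"
    then obtain f y where "f \<in> F n" "y \<in> K n" "z = inv f \<otimes> y" using M(3) by blast
    moreover have "f \<in> H" "y \<in> H" using calculation F(2) HK by blast+
    ultimately show "z \<in> H" by (simp add: subgroup.m_closed[OF sH] subgroup.m_inv_closed[OF sH])
  qed
  let ?M = "insert \<one> (\<Union>n. M n)"
  have "countable (\<Union>n. F n)" using F(1) by (simp add: countable_finite)
  moreover have "compactin X ?M"
    using M(1,2) LIMSEQ_inverse_real_of_nat \<open>\<one> \<in> S\<close> unfolding X r_def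
    by (rule compactin_insert_Union_mcball_shrinking)
  moreover have "?M \<subseteq> H" using MH subgroup.one_closed[OF sH] by blast
  moreover have "generate G ((\<Union>n. F n) \<union> ?M) = H"
  proof (rule generate_eq_subgroup_if_left_translates[OF sH FH \<open>?M \<subseteq> H\<close>])
    fix x assume "x \<in> H"
    then obtain n where "x \<in> K n" using HK by blast
    then show "\<exists>f\<in>\<Union>n. F n. inv f \<otimes> x \<in> ?M" using translates by blast
  qed
  ultimately show ?thesis using FH by (intro exI[of _ "\<Union>n. F n"] exI[of _ ?M]) simp
qed

lemma compactly_generated_K_sigma_if_countable:
  fixes G (structure)
  assumes TG: "topological_group G X" and "metrizable_space X"
    and countable_cg: "\<And>C. subgroup C G \<Longrightarrow> countable C \<Longrightarrow> compactly_generated G X C"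
    and sH: "subgroup H G" and "K_sigma X H"
  shows "compactly_generated G X H"
proof -
  interpret group G using TG by (simp add: topological_group_def)
  obtain F M where F: "countable F" "F \<subseteq> H" and M: "compactin X M" "M \<subseteq> H"
    and H: "H = generate G (F \<union> M)"
    using K_sigma_subgroup_generated_countable_compact[OF TG \<open>metrizable_space X\<close> sH \<open>K_sigma X H\<close>]
    by blast
  have FG: "F \<subseteq> carrier G" and MG: "M \<subseteq> carrier G"
    using F(2) M(2) subgroup.subset[OF sH] by blast+
  have "compactly_generated G X (generate G F)"
    using countable_cg[OF generate_is_subgroup[OF FG] countable_generate[OF F(1)]] .
  then obtain K where K: "K \<subseteq> carrier G" "compactin X K" "generate G F = generate G K"
    unfolding compactly_generated_def by blast
  have "H = generate G (K \<union> M)"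
    using H generate_Un_cong[OF K(3) FG K(1) MG] by simp
  then show ?thesis
    unfolding compactly_generated_def using K(1,2) M(1) MG compactin_Un by blast
qed

theorem mainTheorem8:
  fixes G :: "('a, 'b) monoid_scheme" and X :: "'a topology"
  assumes "Polish_group G X"
  shows "(\<forall>H. subgroup H G \<and> K_sigma X H \<longrightarrow> compactly_generated G X H) \<longleftrightarrow>
         (\<forall>H. subgroup H G \<and> countable H \<longrightarrow> compactly_generated G X H)"
proof -
  have TG: "topological_group G X" and "metrizable_space X"
    using assms completely_metrizable_imp_metrizable_space
    unfolding Polish_group_def Polish_space_def by blast+
  then have X: "topspace X = carrier G" unfolding topological_group_def by blast
  have countable_K_sigma: "K_sigma X H" if "subgroup H G" "countable H" for H
    using countable_imp_K_sigma[OF that(2)] subgroup.subset[OF that(1)] X by simp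
  show ?thesis
  proof (intro iffI allI impI)
    fix H assume "\<forall>H. subgroup H G \<and> K_sigma X H \<longrightarrow> compactly_generated G X H"
      and "subgroup H G \<and> countable H"
    then show "compactly_generated G X H" using countable_K_sigma by blast
  next
    fix H assume "\<forall>H. subgroup H G \<and> countable H \<longrightarrow> compactly_generated G X H"
      and "subgroup H G \<and> K_sigma X H"
    then show "compactly_generated G X H"
      using compactly_generated_K_sigma_if_countable[OF TG \<open>metrizable_space X\<close>] by blast
  qed
qed

end
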